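(* Let $n\ge2$ and let $\mathrm S=\mathrm S_1\cup\mathrm S_2\cup\mathrm S_3$ with $\mathrm S_1\subseteq\{B_{ij}:1\le i<j\le n\}$, $\mathrm S_2\subseteq\{C_{ij}:1\le i<j\le n\}$, $\mathrm S_3\subseteq\{D_{ij}:1\le i<j\le n\}$, and let $\mathscr G_{\mathrm S}$ be its associated edge-colored multigraph. Then the real Lie algebra generated by $\mathrm S$ equals $\mathfrak{su}(n)$ if and only if one of the following holds: (i) $\mathscr G_{\mathrm S}$ has edges of at least two colors, and the Blue edges together with the node set $\{1,\dots,n\}$ form a connected graph; (ii) $\mathscr G_{\mathrm S}$ is connected and has a self-loop; (iii) $\mathscr G_{\mathrm S}$ is connected and has a cycle containing an odd number of Red edges.
   Context: $E_{ij}$ is the $n\times n$ matrix unit; $B_{ij}=E_{ij}-E_{ji}$, $C_{ij}=\mathrm i(E_{ij}+E_{ji})$, $D_{ij}=\mathrm i(E_{ii}-E_{jj})$; $\mathfrak{su}(n)$ is the real Lie algebra of traceless skew-Hermitian $n\times n$ matrices with bracket $[X,Y]=XY-YX$. The edge-colored multigraph $\mathscr G_{\mathrm S}$ has node set $\{1,\dots,n\}$, a Blue edge $\{i,j\}$ for each $B_{ij}\in\mathrm S_1$, a Red edge $\{i,j\}$ for each $C_{ij}\in\mathrm S_2$, and Green self-loops $\{i,i\}$ and $\{j,j\}$ for each $D_{ij}\in\mathrm S_3$; edges with same endpoints but different colors are distinct. A walk alternates nodes and edges with consecutive endpoints; a cycle is a closed walk; connected means any two nodes are joined by a walk. *)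

theory Defs
  imports Main "HOL-Library.Complex_Order" Complex_Main
begin

text \<open>n x n complex matrices are represented as functions nat => nat => complex,
  with row/column indices in {1..n}; entries outside {1..n} x {1..n} are zero.\<close>

type_synonym cmat = "nat \<Rightarrow> nat \<Rightarrow> complex"

definition Emat :: "nat \<Rightarrow> nat \<Rightarrow> cmat" where
  "Emat i j = (\<lambda>a b. if a = i \<and> b = j then 1 else 0)"

definition Bmat :: "nat \<Rightarrow> nat \<Rightarrow> cmat" where
  "Bmat i j = (\<lambda>a b. Emat i j a b - Emat j i a b)"

definition Cmat :: "nat \<Rightarrow> nat \<Rightarrow> cmat" where
  "Cmat i j = (\<lambda>a b. \<i> * (Emat i j a b + Emat j i a b))"

definition Dmat :: "nat \<Rightarrow> nat \<Rightarrow> cmat" where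
  "Dmat i j = (\<lambda>a b. \<i> * (Emat i i a b - Emat j j a b))"

definition matmul :: "nat \<Rightarrow> cmat \<Rightarrow> cmat \<Rightarrow> cmat" where
  "matmul n X Y = (\<lambda>a b. \<Sum>k\<in>{1..n}. X a k * Y k b)"

definition lie_bracket :: "nat \<Rightarrow> cmat \<Rightarrow> cmat \<Rightarrow> cmat" where
  "lie_bracket n X Y = (\<lambda>a b. matmul n X Y a b - matmul n Y X a b)"

definition su :: "nat \<Rightarrow> cmat set" where
  "su n = {X. (\<forall>a b. (a \<notin> {1..n} \<or> b \<notin> {1..n}) \<longrightarrow> X a b = 0)
             \<and> (\<forall>a b. X b a = - cnj (X a b))
             \<and> (\<Sum>a\<in>{1..n}. X a a) = 0}"

inductive_set lie_gen :: "nat \<Rightarrow> cmat set \<Rightarrow> cmat set" for n S where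
  base: "X \<in> S \<Longrightarrow> X \<in> lie_gen n S"
| zero: "(\<lambda>a b. 0) \<in> lie_gen n S"
| add: "X \<in> lie_gen n S \<Longrightarrow> Y \<in> lie_gen n S \<Longrightarrow> (\<lambda>a b. X a b + Y a b) \<in> lie_gen n S"
| smult: "X \<in> lie_gen n S \<Longrightarrow> (\<lambda>a b. complex_of_real r * X a b) \<in> lie_gen n S"
| brk: "X \<in> lie_gen n S \<Longrightarrow> Y \<in> lie_gen n S \<Longrightarrow> lie_bracket n X Y \<in> lie_gen n S"

text \<open>Edge-colored multigraph G_S. S_1 = Bmat ` P1, S_2 = Cmat ` P2, S_3 = Dmat ` P3,
  where P1, P2, P3 are sets of index pairs (i,j) with 1 <= i < j <= n.\<close>
datatype color = Blue | Red | Green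

definition has_edge ::
  "(nat \<times> nat) set \<Rightarrow> (nat \<times> nat) set \<Rightarrow> (nat \<times> nat) set \<Rightarrow> color \<Rightarrow> nat \<Rightarrow> nat \<Rightarrow> bool" where
  "has_edge P1 P2 P3 c u v =
     (case c of
        Blue \<Rightarrow> (u, v) \<in> P1 \<or> (v, u) \<in> P1
      | Red \<Rightarrow> (u, v) \<in> P2 \<or> (v, u) \<in> P2
      | Green \<Rightarrow> u = v \<and> (\<exists>(i, j)\<in>P3. u = i \<or> u = j))"

definition adj :: "(nat \<times> nat) set \<Rightarrow> (nat \<times> nat) set \<Rightarrow> (nat \<times> nat) set \<Rightarrow> nat \<Rightarrow> nat \<Rightarrow> bool" where
  "adj P1 P2 P3 u v = (\<exists>c. has_edge P1 P2 P3 c u v)"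

definition graph_connected :: "nat \<Rightarrow> (nat \<times> nat) set \<Rightarrow> (nat \<times> nat) set \<Rightarrow> (nat \<times> nat) set \<Rightarrow> bool" where
  "graph_connected n P1 P2 P3 = (\<forall>u\<in>{1..n}. \<forall>v\<in>{1..n}. (adj P1 P2 P3)\<^sup>*\<^sup>* u v)"

definition blue_connected :: "nat \<Rightarrow> (nat \<times> nat) set \<Rightarrow> bool" where
  "blue_connected n P1 = (\<forall>u\<in>{1..n}. \<forall>v\<in>{1..n}. (has_edge P1 {} {} Blue)\<^sup>*\<^sup>* u v)"

definition color_used :: "(nat \<times> nat) set \<Rightarrow> (nat \<times> nat) set \<Rightarrow> (nat \<times> nat) set \<Rightarrow> color \<Rightarrow> bool" where
  "color_used P1 P2 P3 c = (\<exists>u v. has_edge P1 P2 P3 c u v)"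

definition has_self_loop :: "(nat \<times> nat) set \<Rightarrow> (nat \<times> nat) set \<Rightarrow> (nat \<times> nat) set \<Rightarrow> bool" where
  "has_self_loop P1 P2 P3 = (\<exists>c u. has_edge P1 P2 P3 c u u)"

definition closed_walk ::
  "(nat \<times> nat) set \<Rightarrow> (nat \<times> nat) set \<Rightarrow> (nat \<times> nat) set \<Rightarrow> (nat \<times> color \<times> nat) list \<Rightarrow> bool" where
  "closed_walk P1 P2 P3 w =
     (w \<noteq> [] \<and>
      (\<forall>s\<in>set w. case s of (u, c, v) \<Rightarrow> has_edge P1 P2 P3 c u v) \<and>
      (\<forall>k. Suc k < length w \<longrightarrow> snd (snd (w ! k)) = fst (w ! Suc k)) \<and>
      snd (snd (last w)) = fst (hd w))"

definition red_count :: "(nat \<times> color \<times> nat) list \<Rightarrow> nat" where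
  "red_count w = length (filter (\<lambda>s. fst (snd s) = Red) w)"

end

theory Submission
  imports Defs
begin

(* Write F_ij(z) = z E_ij - cnj(z) E_ji, so that B_ij = F_ij(1), C_ij = F_ij(i), and
   [F_xy(z), F_yw(u)] = F_xw(z u) for distinct x, y, w.  Bracketing along walks, a connected
   graph yields F_xy(1) or F_xy(i) for every pair of nodes.  Once a single pair carries both,
   brackets spread this to all pairs, [F_ab(1), F_ab(i)] = 2 D_ab supplies the diagonal, and
   the algebra is all of su(n).  Such a pair comes from a Green edge, as
   [D_ij, F_ij(z)] = F_ij(2iz); from a Red edge when Blue-connectedness provides every F_xy(1);
   or from an odd Red cycle: otherwise, which of F_xy(1), F_xy(i) is generated defines a cut
   of the nodes crossed by exactly the Red edges, and every closed walk crosses it an even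
   number of times.

   Conversely, a disconnected graph keeps the algebra block-triangular.  Without Green edges
   and with such a Red cut rho, conjugating by the diagonal phase g_x = i^(rho x) makes every
   generator, hence every generated matrix, real; but the conjugate of D_12 has the entry i. *)

section \<open>Off-diagonal skew-Hermitian matrices\<close>

definition Fmat :: "nat \<Rightarrow> nat \<Rightarrow> complex \<Rightarrow> cmat" where
  "Fmat i j z = (\<lambda>a b. (if a = i \<and> b = j then z else 0) + (if a = j \<and> b = i then - cnj z else 0))"

lemma Bmat_eq_Fmat: "Bmat i j = Fmat i j 1"
  by (auto simp: Bmat_def Fmat_def Emat_def fun_eq_iff)

lemma Cmat_eq_Fmat: "Cmat i j = Fmat i j \<i>"
proof -
  have "Cmat i j a b = Fmat i j \<i> a b" for a b
    by (cases "a = i"; cases "b = j"; cases "a = j"; cases "b = i")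
      (simp_all add: Cmat_def Fmat_def Emat_def)
  then show ?thesis by blast
qed

lemma Fmat_swap: "Fmat j i z = Fmat i j (- cnj z)"
  by (auto simp: Fmat_def fun_eq_iff)

lemma Fmat_same_one: "Fmat i i 1 = (\<lambda>a b. 0)"
  by (simp add: Fmat_def fun_eq_iff)

lemma Fmat_scaleR: "(\<lambda>a b. complex_of_real r * Fmat i j z a b) = Fmat i j (complex_of_real r * z)"
proof -
  have "complex_of_real r * Fmat i j z a b = Fmat i j (complex_of_real r * z) a b" for a b
    by (cases "a = i"; cases "b = j"; cases "a = j"; cases "b = i") (simp_all add: Fmat_def algebra_simps)
  then show ?thesis by blast
qed

lemma Fmat_Re_Im:
  "Fmat i j z = (\<lambda>a b. complex_of_real (Re z) * Fmat i j 1 a b + complex_of_real (Im z) * Fmat i j \<i> a b)"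
proof -
  have "Fmat i j z a b = complex_of_real (Re z) * Fmat i j 1 a b + complex_of_real (Im z) * Fmat i j \<i> a b" for a b
    by (cases "a = i"; cases "b = j"; cases "a = j"; cases "b = i") (simp_all add: Fmat_def complex_eq_iff)
  then show ?thesis by blast
qed

lemma Fmat_nonzero: "Fmat i j z x y \<noteq> 0 \<Longrightarrow> (x = i \<and> y = j) \<or> (x = j \<and> y = i)"
  unfolding Fmat_def by (auto split: if_splits)

lemma Dmat_nonzero: "Dmat i j x y \<noteq> 0 \<Longrightarrow> x = y"
  unfolding Dmat_def Emat_def by (auto split: if_splits)

lemma if_zero_mult:
  "(if P then c else 0) * (t::complex) = (if P then c * t else 0)"
  "t * (if P then c else 0) = (if P then t * c else 0)"
  by auto

lemma Fmat_apply_col: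
  "Fmat i j z a k = (if k = j then (if a = i then z else 0) else 0) + (if k = i then (if a = j then - cnj z else 0) else 0)"
  by (auto simp: Fmat_def)

lemma Fmat_apply_row:
  "Fmat i j z k b = (if k = i then (if b = j then z else 0) else 0) + (if k = j then (if b = i then - cnj z else 0) else 0)"
  by (auto simp: Fmat_def)

lemma Dmat_apply_row:
  "Dmat i j k b = (if k = i then (if b = i then \<i> else 0) else 0) - (if k = j then (if b = j then \<i> else 0) else 0)"
  by (auto simp: Dmat_def Emat_def)

lemma matmul_Fmat_left:
  assumes "i \<in> {1..n}" "j \<in> {1..n}" "i \<noteq> j"
  shows "matmul n (Fmat i j z) Y a b = (if a = i then z * Y j b else 0) + (if a = j then - cnj z * Y i b else 0)"
  using assms by (simp add: matmul_def Fmat_apply_col distrib_right sum.distrib if_zero_mult)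

lemma matmul_Fmat_right:
  assumes "i \<in> {1..n}" "j \<in> {1..n}" "i \<noteq> j"
  shows "matmul n Y (Fmat i j z) a b = (if b = j then Y a i * z else 0) + (if b = i then Y a j * (- cnj z) else 0)"
  using assms by (simp add: matmul_def Fmat_apply_row distrib_left sum.distrib if_zero_mult)

lemma matmul_Dmat_left:
  assumes "i \<in> {1..n}" "j \<in> {1..n}" "i \<noteq> j"
  shows "matmul n (Dmat i j) Y a b = (if a = i then \<i> * Y i b else 0) - (if a = j then \<i> * Y j b else 0)"
  using assms by (simp add: matmul_def Dmat_apply_row left_diff_distrib sum_subtractf if_zero_mult)

lemma lie_bracket_Fmat_Fmat:
  assumes "x \<in> {1..n}" "y \<in> {1..n}" "w \<in> {1..n}" "x \<noteq> y" "y \<noteq> w" "x \<noteq> w"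
  shows "lie_bracket n (Fmat x y z) (Fmat y w u) = Fmat x w (z * u)"
  unfolding lie_bracket_def fun_eq_iff
  using assms by (simp add: matmul_Fmat_left matmul_Fmat_right) (simp add: Fmat_def)

lemma lie_bracket_Dmat_Fmat:
  assumes "i \<in> {1..n}" "j \<in> {1..n}" "i \<noteq> j"
  shows "lie_bracket n (Dmat i j) (Fmat i j z) = Fmat i j (2 * \<i> * z)"
  unfolding lie_bracket_def fun_eq_iff
  using assms by (simp add: matmul_Dmat_left matmul_Fmat_left) (simp add: Fmat_def Dmat_def Emat_def)

lemma lie_bracket_Fmat_one_Fmat_i:
  assumes "i \<in> {1..n}" "j \<in> {1..n}" "i \<noteq> j"
  shows "lie_bracket n (Fmat i j 1) (Fmat i j \<i>) = (\<lambda>a b. 2 * Dmat i j a b)"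
  unfolding lie_bracket_def fun_eq_iff
  using assms by (simp add: matmul_Fmat_left matmul_Fmat_right) (simp add: Fmat_def Dmat_def Emat_def)

section \<open>Real Lie subalgebras\<close>

definition lie_subalgebra :: "nat \<Rightarrow> cmat set \<Rightarrow> bool" where
  "lie_subalgebra n T \<longleftrightarrow>
     (\<lambda>a b. 0) \<in> T \<and>
     (\<forall>X\<in>T. \<forall>Y\<in>T. (\<lambda>a b. X a b + Y a b) \<in> T) \<and>
     (\<forall>X\<in>T. \<forall>r. (\<lambda>a b. complex_of_real r * X a b) \<in> T) \<and>
     (\<forall>X\<in>T. \<forall>Y\<in>T. lie_bracket n X Y \<in> T)"

lemma lie_subalgebraI:
  assumes "(\<lambda>a b. 0) \<in> T"
    and "\<And>X Y. X \<in> T \<Longrightarrow> Y \<in> T \<Longrightarrow> (\<lambda>a b. X a b + Y a b) \<in> T"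
    and "\<And>X r. X \<in> T \<Longrightarrow> (\<lambda>a b. complex_of_real r * X a b) \<in> T"
    and "\<And>X Y. X \<in> T \<Longrightarrow> Y \<in> T \<Longrightarrow> lie_bracket n X Y \<in> T"
  shows "lie_subalgebra n T"
  using assms unfolding lie_subalgebra_def by blast

lemma lie_gen_subset:
  assumes "S \<subseteq> T" and "lie_subalgebra n T"
  shows "lie_gen n S \<subseteq> T"
proof
  fix X assume "X \<in> lie_gen n S"
  then show "X \<in> T"
    by induction (use assms in \<open>auto simp: lie_subalgebra_def\<close>)
qed

lemma suD:
  assumes "X \<in> su n"
  shows "a \<notin> {1..n} \<or> b \<notin> {1..n} \<Longrightarrow> X a b = 0"
    and "X b a = - cnj (X a b)"
    and "(\<Sum>a\<in>{1..n}. X a a) = 0"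
  using assms unfolding su_def by blast+

lemma suI:
  assumes "\<And>a b. a \<notin> {1..n} \<or> b \<notin> {1..n} \<Longrightarrow> X a b = 0"
    and "\<And>a b. X b a = - cnj (X a b)"
    and "(\<Sum>a\<in>{1..n}. X a a) = 0"
  shows "X \<in> su n"
  using assms unfolding su_def by blast

lemma su_add:
  assumes X: "X \<in> su n" and Y: "Y \<in> su n"
  shows "(\<lambda>a b. X a b + Y a b) \<in> su n"
proof (rule suI)
  show "X a b + Y a b = 0" if "a \<notin> {1..n} \<or> b \<notin> {1..n}" for a b
    using suD(1)[OF X that] suD(1)[OF Y that] by simp
  show "X b a + Y b a = - cnj (X a b + Y a b)" for a b
    by (simp add: suD(2)[OF X, of a b] suD(2)[OF Y, of a b])
  show "(\<Sum>a\<in>{1..n}. X a a + Y a a) = 0"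
    using suD(3)[OF X] suD(3)[OF Y] by (simp add: sum.distrib)
qed

lemma su_scaleR:
  assumes X: "X \<in> su n"
  shows "(\<lambda>a b. complex_of_real r * X a b) \<in> su n"
proof (rule suI)
  show "complex_of_real r * X a b = 0" if "a \<notin> {1..n} \<or> b \<notin> {1..n}" for a b
    using suD(1)[OF X that] by simp
  show "complex_of_real r * X b a = - cnj (complex_of_real r * X a b)" for a b
    by (simp add: suD(2)[OF X, of a b])
  show "(\<Sum>a\<in>{1..n}. complex_of_real r * X a a) = 0"
    using suD(3)[OF X] by (simp add: sum_distrib_left[symmetric])
qed

lemma lie_bracket_in_su:
  assumes X: "X \<in> su n" and Y: "Y \<in> su n"
  shows "lie_bracket n X Y \<in> su n"
proof (rule suI)
  show "lie_bracket n X Y a b = 0" if "a \<notin> {1..n} \<or> b \<notin> {1..n}" for a b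
    using that suD(1)[OF X] suD(1)[OF Y] by (auto simp: lie_bracket_def matmul_def)
  show "lie_bracket n X Y b a = - cnj (lie_bracket n X Y a b)" for a b
  proof -
    have "X b k * Y k a = cnj (Y a k) * cnj (X k b)" for k
      by (simp add: suD(2)[OF X, of k b] suD(2)[OF Y, of a k])
    then have XY: "(\<Sum>k\<in>{1..n}. X b k * Y k a) = (\<Sum>k\<in>{1..n}. cnj (Y a k) * cnj (X k b))"
      by simp
    have "Y b k * X k a = cnj (X a k) * cnj (Y k b)" for k
      by (simp add: suD(2)[OF X, of a k] suD(2)[OF Y, of k b])
    then have YX: "(\<Sum>k\<in>{1..n}. Y b k * X k a) = (\<Sum>k\<in>{1..n}. cnj (X a k) * cnj (Y k b))"
      by simp
    show ?thesis
      unfolding lie_bracket_def matmul_def XY YX by (simp add: cnj_sum)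
  qed
  show "(\<Sum>a\<in>{1..n}. lie_bracket n X Y a a) = 0"
    unfolding lie_bracket_def matmul_def sum_subtractf
    by (subst sum.swap) (simp add: mult.commute)
qed

lemma lie_subalgebra_su: "lie_subalgebra n (su n)"
proof (rule lie_subalgebraI)
  show "(\<lambda>a b. 0) \<in> su n"
    by (simp add: su_def)
qed (auto intro: su_add su_scaleR lie_bracket_in_su)

lemma Fmat_in_su:
  assumes "i \<in> {1..n}" "j \<in> {1..n}" "i \<noteq> j"
  shows "Fmat i j z \<in> su n"
proof (rule suI)
  show "Fmat i j z a b = 0" if "a \<notin> {1..n} \<or> b \<notin> {1..n}" for a b
    using assms that by (auto simp: Fmat_def)
  show "Fmat i j z b a = - cnj (Fmat i j z a b)" for a b
    by (cases "a = i"; cases "b = j"; cases "a = j"; cases "b = i") (simp_all add: Fmat_def)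
  show "(\<Sum>a\<in>{1..n}. Fmat i j z a a) = 0"
    using assms by (intro sum.neutral) (auto simp: Fmat_def)
qed

lemma Dmat_in_su: "i \<in> {1..n} \<Longrightarrow> j \<in> {1..n} \<Longrightarrow> i \<noteq> j \<Longrightarrow> Dmat i j \<in> su n"
  unfolding su_def by (auto simp: Dmat_def Emat_def sum_subtractf sum_distrib_left[symmetric])

lemma lie_subalgebra_block: "lie_subalgebra n {X. \<forall>x y. x \<in> K \<longrightarrow> y \<notin> K \<longrightarrow> X x y = 0}"
proof (rule lie_subalgebraI)
  fix X Y :: cmat
  assume "X \<in> {X. \<forall>x y. x \<in> K \<longrightarrow> y \<notin> K \<longrightarrow> X x y = 0}"
    and "Y \<in> {X. \<forall>x y. x \<in> K \<longrightarrow> y \<notin> K \<longrightarrow> X x y = 0}"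
  then have X: "\<And>x y. x \<in> K \<Longrightarrow> y \<notin> K \<Longrightarrow> X x y = 0"
    and Y: "\<And>x y. x \<in> K \<Longrightarrow> y \<notin> K \<Longrightarrow> Y x y = 0"
    by auto
  have "lie_bracket n X Y x y = 0" if "x \<in> K" "y \<notin> K" for x y
  proof -
    have XY: "X x k * Y k y = 0" and YX: "Y x k * X k y = 0" for k
      using that X Y by (cases "k \<in> K"; simp)+
    show ?thesis
      unfolding lie_bracket_def matmul_def XY YX by simp
  qed
  then show "lie_bracket n X Y \<in> {X. \<forall>x y. x \<in> K \<longrightarrow> y \<notin> K \<longrightarrow> X x y = 0}"
    by simp
qed auto

lemma Fmat_phase_real:
  assumes "cnj (g i) * z * g j \<in> \<real>" and "i \<noteq> j"
  shows "cnj (g x) * Fmat i j z x y * g y \<in> \<real>"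
proof -
  consider "x = i" "y = j" | "x = j" "y = i" | "Fmat i j z x y = 0"
    using Fmat_nonzero by blast
  then show ?thesis
  proof cases
    case 1
    then show ?thesis
      using assms by (simp add: Fmat_def)
  next
    case 2
    then have "cnj (g x) * Fmat i j z x y * g y = - cnj (cnj (g i) * z * g j)"
      using assms(2) by (simp add: Fmat_def)
    then show ?thesis
      using assms(1) by (simp add: Reals_cnj_iff)
  qed simp
qed

lemma lie_subalgebra_phase_real:
  assumes unit: "\<And>k. cnj (g k) * g k = 1"
  shows "lie_subalgebra n {X. \<forall>x y. cnj (g x) * X x y * g y \<in> \<real>}"
proof (rule lie_subalgebraI)
  fix X Y :: cmat
  assume "X \<in> {X. \<forall>x y. cnj (g x) * X x y * g y \<in> \<real>}"
    and "Y \<in> {X. \<forall>x y. cnj (g x) * X x y * g y \<in> \<real>}"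
  then have X: "\<And>x y. cnj (g x) * X x y * g y \<in> \<real>" and Y: "\<And>x y. cnj (g x) * Y x y * g y \<in> \<real>"
    by auto
  then show "(\<lambda>a b. X a b + Y a b) \<in> {X. \<forall>x y. cnj (g x) * X x y * g y \<in> \<real>}"
    by (simp add: distrib_left distrib_right)
  have factor: "cnj (g x) * (A x k * B k y) * g y = (cnj (g x) * A x k * g k) * (cnj (g k) * B k y * g y)"
    for A B :: cmat and x y k
  proof -
    have "(cnj (g x) * A x k * g k) * (cnj (g k) * B k y * g y)
        = cnj (g x) * A x k * (cnj (g k) * g k) * B k y * g y"
      by (simp add: algebra_simps)
    then show ?thesis
      using unit[of k] by simp
  qed
  have "cnj (g x) * lie_bracket n X Y x y * g y \<in> \<real>" for x y
  proof -
    have "cnj (g x) * lie_bracket n X Y x y * g y =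
        (\<Sum>k\<in>{1..n}. (cnj (g x) * X x k * g k) * (cnj (g k) * Y k y * g y))
      - (\<Sum>k\<in>{1..n}. (cnj (g x) * Y x k * g k) * (cnj (g k) * X k y * g y))"
      unfolding lie_bracket_def matmul_def right_diff_distrib left_diff_distrib
        sum_distrib_left sum_distrib_right factor ..
    also have "\<dots> \<in> \<real>"
      by (intro Reals_diff sum_in_Reals Reals_mult[OF X Y] Reals_mult[OF Y X])
    finally show ?thesis .
  qed
  then show "lie_bracket n X Y \<in> {X. \<forall>x y. cnj (g x) * X x y * g y \<in> \<real>}"
    by simp
next
  fix X :: cmat and r
  assume "X \<in> {X. \<forall>x y. cnj (g x) * X x y * g y \<in> \<real>}"
  then have "complex_of_real r * (cnj (g x) * X x y * g y) \<in> \<real>" for x y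
    by (simp add: Reals_mult)
  then show "(\<lambda>a b. complex_of_real r * X a b) \<in> {X. \<forall>x y. cnj (g x) * X x y * g y \<in> \<real>}"
    by (simp add: algebra_simps)
qed simp

section \<open>Spanning \<open>su(n)\<close>\<close>

lemma lie_gen_Fmat_scaleR:
  "Fmat i j z \<in> lie_gen n S \<Longrightarrow> Fmat i j (complex_of_real r * z) \<in> lie_gen n S"
  by (metis Fmat_scaleR lie_gen.smult)

lemma lie_gen_Fmat_uminus: "Fmat i j z \<in> lie_gen n S \<Longrightarrow> Fmat i j (- z) \<in> lie_gen n S"
  using lie_gen_Fmat_scaleR[of i j z n S "-1"] by simp

lemma lie_gen_Fmat_swap: "Fmat i j z \<in> lie_gen n S \<Longrightarrow> Fmat j i (cnj z) \<in> lie_gen n S"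
  using lie_gen_Fmat_uminus[of i j z] by (simp add: Fmat_swap[of j i])

lemma lie_gen_Fmat_bracket:
  assumes "x \<in> {1..n}" "y \<in> {1..n}" "w \<in> {1..n}" "x \<noteq> y" "y \<noteq> w" "x \<noteq> w"
    and "Fmat x y z \<in> lie_gen n S" "Fmat y w u \<in> lie_gen n S"
  shows "Fmat x w (z * u) \<in> lie_gen n S"
  using lie_gen.brk[OF assms(7,8)] by (simp add: lie_bracket_Fmat_Fmat[OF assms(1-6)])

lemma lie_gen_sum:
  assumes "finite I" "\<And>i. i \<in> I \<Longrightarrow> M i \<in> lie_gen n S"
  shows "(\<lambda>a b. \<Sum>i\<in>I. M i a b) \<in> lie_gen n S"
  using assms
proof (induction I rule: finite_induct)
  case empty
  then show ?case by (simp add: lie_gen.zero)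
next
  case (insert i I)
  then show ?case
    using lie_gen.add[of "M i" n S "\<lambda>a b. \<Sum>i\<in>I. M i a b"] by simp
qed

definition index_pairs :: "nat \<Rightarrow> (nat \<times> nat) set" where
  "index_pairs n = {(i, j). 1 \<le> i \<and> i < j \<and> j \<le> n}"

lemma finite_index_pairs: "finite (index_pairs n)"
  by (rule finite_subset[of _ "{1..n} \<times> {1..n}"]) (auto simp: index_pairs_def)

lemma sum_Fmat_offdiag:
  assumes "X \<in> su n"
  shows "(\<Sum>p\<in>index_pairs n. Fmat (fst p) (snd p) (X (fst p) (snd p)) x y) = (if x = y then 0 else X x y)"
proof -
  have entry: "Fmat a b (X a b) x y = (if (a, b) = (x, y) then X x y else 0) + (if (a, b) = (y, x) then X x y else 0)"
    if "a \<noteq> b" for a b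
    using that by (cases "a = x"; cases "b = y"; cases "a = y"; cases "b = x") (simp_all add: Fmat_def suD(2)[OF assms, of y x])
  have "(\<Sum>p\<in>index_pairs n. Fmat (fst p) (snd p) (X (fst p) (snd p)) x y)
      = (\<Sum>p\<in>index_pairs n. (if p = (x, y) then X x y else 0) + (if p = (y, x) then X x y else 0))"
  proof (intro sum.cong refl)
    fix p assume "p \<in> index_pairs n"
    then have "fst p \<noteq> snd p"
      by (auto simp: index_pairs_def)
    from entry[OF this] show "Fmat (fst p) (snd p) (X (fst p) (snd p)) x y
        = (if p = (x, y) then X x y else 0) + (if p = (y, x) then X x y else 0)"
      by (simp only: prod.collapse)
  qed
  also have "\<dots> = (if (x, y) \<in> index_pairs n then X x y else 0) + (if (y, x) \<in> index_pairs n then X x y else 0)"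
    by (simp add: sum.distrib finite_index_pairs)
  also have "\<dots> = (if x = y then 0 else X x y)"
    using suD(1)[OF assms] by (auto simp: index_pairs_def)
  finally show ?thesis .
qed

lemma su_diag_imaginary:
  assumes "X \<in> su n"
  shows "X a a = \<i> * complex_of_real (Im (X a a))"
proof -
  have "X a a = - cnj (X a a)"
    by (rule suD(2)[OF assms])
  then have "Re (X a a) = Re (- cnj (X a a))"
    by (rule arg_cong)
  then show ?thesis
    by (simp add: complex_eq_iff)
qed

lemma sum_Dmat_diag:
  assumes "X \<in> su n" "n \<ge> 1"
  shows "(\<Sum>a\<in>{1..<n}. complex_of_real (Im (X a a)) * Dmat a n x y) = (if x = y then X x x else 0)"
proof -
  have Xnn: "X n n = - (\<Sum>a\<in>{1..<n}. \<i> * complex_of_real (Im (X a a)))"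
  proof -
    have "{1..n} = insert n {1..<n}"
      using assms(2) by auto
    then have "X n n = - (\<Sum>a\<in>{1..<n}. X a a)"
      using suD(3)[OF assms(1)] by (simp add: eq_neg_iff_add_eq_0)
    also have "(\<Sum>a\<in>{1..<n}. X a a) = (\<Sum>a\<in>{1..<n}. \<i> * complex_of_real (Im (X a a)))"
      by (rule sum.cong[OF refl]) (rule su_diag_imaginary[OF assms(1)])
    finally show ?thesis .
  qed
  have entry: "complex_of_real (Im (X a a)) * Dmat a n x y
      = (if x = y \<and> x = a then \<i> * complex_of_real (Im (X x x)) else 0)
        - (if x = y \<and> x = n then \<i> * complex_of_real (Im (X a a)) else 0)" if "a \<in> {1..<n}" for a
    using that unfolding Dmat_def Emat_def
    by (cases "x = a"; cases "y = a"; cases "x = n"; cases "y = n") (simp_all add: algebra_simps)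
  have "(\<Sum>a\<in>{1..<n}. complex_of_real (Im (X a a)) * Dmat a n x y)
      = (\<Sum>a\<in>{1..<n}. (if x = y \<and> x = a then \<i> * complex_of_real (Im (X x x)) else 0)
        - (if x = y \<and> x = n then \<i> * complex_of_real (Im (X a a)) else 0))"
    by (simp add: entry)
  also have "\<dots> = (if x = y \<and> x \<in> {1..<n} then \<i> * complex_of_real (Im (X x x)) else 0)
        - (if x = y \<and> x = n then (\<Sum>a\<in>{1..<n}. \<i> * complex_of_real (Im (X a a))) else 0)"
    by (cases "x = y"; cases "x = n") (simp_all add: sum_subtractf sum_negf)
  also have "\<dots> = (if x = y then X x x else 0)"
    using suD(1)[OF assms(1), of x x] Xnn su_diag_imaginary[OF assms(1), of x] by auto
  finally show ?thesis .
qed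

lemma su_subset_lie_gen:
  assumes F: "\<And>x y z. x \<in> {1..n} \<Longrightarrow> y \<in> {1..n} \<Longrightarrow> x \<noteq> y \<Longrightarrow> Fmat x y z \<in> lie_gen n S"
    and "n \<ge> 1"
  shows "su n \<subseteq> lie_gen n S"
proof
  fix X assume X: "X \<in> su n"
  have D: "Dmat a n \<in> lie_gen n S" if "a \<in> {1..<n}" for a
  proof -
    have a: "a \<in> {1..n}" "n \<in> {1..n}" "a \<noteq> n"
      using that by auto
    have "(\<lambda>x y. 2 * Dmat a n x y) \<in> lie_gen n S"
      using lie_gen.brk[OF F[OF a, of 1] F[OF a, of \<i>]] by (simp add: lie_bracket_Fmat_one_Fmat_i[OF a])
    from lie_gen.smult[OF this, of "1/2"] show ?thesis
      by simp
  qed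
  have "X = (\<lambda>x y. (\<Sum>p\<in>index_pairs n. Fmat (fst p) (snd p) (X (fst p) (snd p)) x y)
                 + (\<Sum>a\<in>{1..<n}. complex_of_real (Im (X a a)) * Dmat a n x y))"
    unfolding sum_Fmat_offdiag[OF X] sum_Dmat_diag[OF X \<open>n \<ge> 1\<close>] by (simp add: fun_eq_iff)
  also have "\<dots> \<in> lie_gen n S"
    by (intro lie_gen.add lie_gen_sum finite_index_pairs finite_atLeastLessThan F lie_gen.smult D)
      (auto simp: index_pairs_def)
  finally show "X \<in> lie_gen n S" .
qed

section \<open>Linked pairs of nodes\<close>

definition linked :: "nat \<Rightarrow> cmat set \<Rightarrow> nat \<Rightarrow> nat \<Rightarrow> bool" where
  "linked n S x y \<longleftrightarrow> Fmat x y 1 \<in> lie_gen n S \<or> Fmat x y \<i> \<in> lie_gen n S"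

definition fully_linked :: "nat \<Rightarrow> cmat set \<Rightarrow> nat \<Rightarrow> nat \<Rightarrow> bool" where
  "fully_linked n S x y \<longleftrightarrow> (\<forall>z. Fmat x y z \<in> lie_gen n S)"

lemma fully_linked_iff:
  "fully_linked n S x y \<longleftrightarrow> Fmat x y 1 \<in> lie_gen n S \<and> Fmat x y \<i> \<in> lie_gen n S"
proof -
  have "Fmat x y z \<in> lie_gen n S" if "Fmat x y 1 \<in> lie_gen n S" "Fmat x y \<i> \<in> lie_gen n S" for z
    by (subst Fmat_Re_Im) (intro lie_gen.add lie_gen.smult that)
  then show ?thesis
    unfolding fully_linked_def by blast
qed

lemma linked_refl: "linked n S x x"
  by (simp add: linked_def Fmat_same_one lie_gen.zero)

lemma fully_linked_sym: "fully_linked n S x y \<Longrightarrow> fully_linked n S y x"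
  unfolding fully_linked_def by (metis complex_cnj_cnj lie_gen_Fmat_swap)

lemma linked_trans:
  assumes "x \<in> {1..n}" "y \<in> {1..n}" "w \<in> {1..n}" and "linked n S x y" "linked n S y w"
  shows "linked n S x w"
proof -
  consider "x = y" | "y = w" | "x = w" | "x \<noteq> y" "y \<noteq> w" "x \<noteq> w"
    by blast
  then show ?thesis
  proof cases
    case 4
    obtain z u where "z \<in> {1, \<i>}" "u \<in> {1, \<i>}" "Fmat x y z \<in> lie_gen n S" "Fmat y w u \<in> lie_gen n S"
      using assms(4,5) unfolding linked_def by blast
    moreover from this have "Fmat x w (z * u) \<in> lie_gen n S"
      using lie_gen_Fmat_bracket[OF assms(1-3) 4] by blast
    ultimately show ?thesis
      unfolding linked_def using lie_gen_Fmat_uminus[of x w "-1" n S] by auto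
  qed (use assms linked_refl in auto)
qed

lemma fully_linked_linked_trans:
  assumes "x \<in> {1..n}" "y \<in> {1..n}" "w \<in> {1..n}" "x \<noteq> y" "y \<noteq> w" "x \<noteq> w"
    and "fully_linked n S x y" "linked n S y w"
  shows "fully_linked n S x w"
  unfolding fully_linked_def
proof
  fix t
  obtain u where u: "u \<in> {1, \<i>}" "Fmat y w u \<in> lie_gen n S"
    using assms(8) unfolding linked_def by blast
  have "Fmat x y (t / u) \<in> lie_gen n S"
    using assms(7) unfolding fully_linked_def by blast
  then have "Fmat x w (t / u * u) \<in> lie_gen n S"
    by (rule lie_gen_Fmat_bracket[OF assms(1-6) _ u(2)])
  moreover have "u \<noteq> 0"
    using u(1) by auto
  ultimately show "Fmat x w t \<in> lie_gen n S"
    by simp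
qed

lemma fully_linked_all_pairs:
  assumes linked: "\<And>x y. x \<in> {1..n} \<Longrightarrow> y \<in> {1..n} \<Longrightarrow> linked n S x y"
    and ab: "a \<in> {1..n}" "b \<in> {1..n}" "a \<noteq> b" "fully_linked n S a b"
    and xy: "x \<in> {1..n}" "y \<in> {1..n}" "x \<noteq> y"
  shows "fully_linked n S x y"
proof -
  have from_a: "fully_linked n S a z" if "z \<in> {1..n}" "z \<noteq> a" for z
  proof (cases "z = b")
    case False
    then show ?thesis
      using fully_linked_linked_trans[OF ab(1,2) that(1) ab(3) _ _ ab(4) linked[OF ab(2) that(1)]] that
      by auto
  qed (use ab in simp)
  show ?thesis
  proof (cases "x = a")
    case x_ne_a: False
    then have xa: "fully_linked n S x a"
      using from_a[OF xy(1)] fully_linked_sym by blast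
    show ?thesis
    proof (cases "y = a")
      case False
      then show ?thesis
        using fully_linked_linked_trans[OF xy(1) ab(1) xy(2) x_ne_a _ xy(3) xa linked[OF ab(1) xy(2)]]
        by auto
    qed (use xa in simp)
  qed (use from_a xy in auto)
qed

(* The conjunct x \<noteq> y discards the diagonal matrix Fmat x x \<i>; it makes the cocycle
   identity below hold also when nodes repeat. *)
definition imag_linked :: "nat \<Rightarrow> cmat set \<Rightarrow> nat \<Rightarrow> nat \<Rightarrow> bool" where
  "imag_linked n S x y \<longleftrightarrow> x \<noteq> y \<and> Fmat x y \<i> \<in> lie_gen n S"

lemma Fmat_one_iff_not_imag_linked:
  assumes "linked n S x y" "\<not> fully_linked n S x y" "x \<noteq> y"
  shows "Fmat x y 1 \<in> lie_gen n S \<longleftrightarrow> \<not> imag_linked n S x y"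
  using assms unfolding imag_linked_def linked_def fully_linked_iff by blast

lemma imag_linked_cocycle:
  assumes linked: "\<And>x y. x \<in> {1..n} \<Longrightarrow> y \<in> {1..n} \<Longrightarrow> linked n S x y"
    and none: "\<And>x y. x \<in> {1..n} \<Longrightarrow> y \<in> {1..n} \<Longrightarrow> x \<noteq> y \<Longrightarrow> \<not> fully_linked n S x y"
    and r: "x \<in> {1..n}" "y \<in> {1..n}" "z \<in> {1..n}"
  shows "imag_linked n S x z \<longleftrightarrow> imag_linked n S x y \<noteq> imag_linked n S y z"
proof -
  have one_iff: "Fmat x y 1 \<in> lie_gen n S \<longleftrightarrow> \<not> imag_linked n S x y"
    if "x \<in> {1..n}" "y \<in> {1..n}" "x \<noteq> y" for x y
    by (rule Fmat_one_iff_not_imag_linked[OF linked[OF that(1,2)] none[OF that] that(3)])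
  have generated: "Fmat x y (if imag_linked n S x y then \<i> else 1) \<in> lie_gen n S"
    if "x \<in> {1..n}" "y \<in> {1..n}" "x \<noteq> y" for x y
    using one_iff[OF that] that unfolding imag_linked_def by auto
  consider "x = y \<or> y = z" | "x = z" "x \<noteq> y" | "x \<noteq> y" "y \<noteq> z" "x \<noteq> z"
    by blast
  then show ?thesis
  proof cases
    case 2
    then show ?thesis
      unfolding imag_linked_def using Fmat_swap[of x y \<i>] by auto
  next
    case 3
    let ?s = "imag_linked n S x y" and ?t = "imag_linked n S y z"
    have "Fmat x z ((if ?s then \<i> else 1) * (if ?t then \<i> else 1)) \<in> lie_gen n S"
      using lie_gen_Fmat_bracket[OF r 3 generated generated] r 3 by auto
    then have "Fmat x z (if ?s = ?t then (if ?s then -1 else 1) else \<i>) \<in> lie_gen n S"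
      by (cases ?s; cases ?t) simp_all
    then show ?thesis
      using one_iff[OF r(1,3) 3(3)] lie_gen_Fmat_uminus[of x z "-1"] 3(3)
      unfolding imag_linked_def by (auto split: if_splits)
  qed (auto simp: imag_linked_def)
qed

section \<open>Walks and Red cuts\<close>

fun walk ::
  "(nat \<times> nat) set \<Rightarrow> (nat \<times> nat) set \<Rightarrow> (nat \<times> nat) set \<Rightarrow>
    nat \<Rightarrow> (nat \<times> color \<times> nat) list \<Rightarrow> nat \<Rightarrow> bool"
where
  "walk P1 P2 P3 x [] y \<longleftrightarrow> x = y"
| "walk P1 P2 P3 x ((u, c, v) # w) y \<longleftrightarrow> u = x \<and> has_edge P1 P2 P3 c u v \<and> walk P1 P2 P3 v w y"

lemma successively_iff_nth:
  "successively R w \<longleftrightarrow> (\<forall>k. Suc k < length w \<longrightarrow> R (w ! k) (w ! Suc k))"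
  by (induction R w rule: successively.induct) (simp_all add: All_less_Suc2)

lemma walk_iff:
  "walk P1 P2 P3 x w y \<longleftrightarrow>
     (if w = [] then x = y
      else fst (hd w) = x \<and> snd (snd (last w)) = y \<and> (\<forall>(u, c, v)\<in>set w. has_edge P1 P2 P3 c u v)
        \<and> successively (\<lambda>s t. snd (snd s) = fst t) w)"
proof (induction w arbitrary: x)
  case (Cons s w)
  then show ?case
    by (cases s) (auto simp: successively_Cons)
qed simp

lemma closed_walk_iff_walk:
  "closed_walk P1 P2 P3 w \<longleftrightarrow> w \<noteq> [] \<and> walk P1 P2 P3 (fst (hd w)) w (fst (hd w))"
  by (auto simp: closed_walk_def walk_iff successively_iff_nth)

lemma walk_append:
  "walk P1 P2 P3 x (w1 @ w2) z \<longleftrightarrow> (\<exists>y. walk P1 P2 P3 x w1 y \<and> walk P1 P2 P3 y w2 z)"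
proof (induction w1 arbitrary: x)
  case (Cons s w1)
  then show ?case
    by (cases s) auto
qed simp

fun reverse_step :: "nat \<times> color \<times> nat \<Rightarrow> nat \<times> color \<times> nat" where
  "reverse_step (u, c, v) = (v, c, u)"

lemma walk_reverse: "walk P1 P2 P3 x w y \<Longrightarrow> walk P1 P2 P3 y (rev (map reverse_step w)) x"
proof (induction w arbitrary: x)
  case (Cons s w)
  obtain u c v where s: "s = (u, c, v)"
    by (cases s)
  with Cons show ?case
    by (auto simp: walk_append has_edge_def split: color.splits)
qed simp

lemma red_count_Nil [simp]: "red_count [] = 0"
  and red_count_Cons [simp]: "red_count ((u, c, v) # w) = (if c = Red then 1 else 0) + red_count w"
  and red_count_append [simp]: "red_count (w1 @ w2) = red_count w1 + red_count w2"
  by (simp_all add: red_count_def)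

lemma red_count_reverse [simp]: "red_count (rev (map reverse_step w)) = red_count w"
proof -
  have "fst (snd (reverse_step s)) = fst (snd s)" for s
    by (cases s) simp
  then show ?thesis
    by (simp add: red_count_def rev_filter[symmetric] comp_def)
qed

lemma rtranclp_adj_imp_walk: "(adj P1 P2 P3)\<^sup>*\<^sup>* x y \<Longrightarrow> \<exists>w. walk P1 P2 P3 x w y"
proof (induction rule: rtranclp_induct)
  case base
  show ?case
    using walk.simps(1) by blast
next
  case (step y z)
  then obtain w c where "walk P1 P2 P3 x w y" "has_edge P1 P2 P3 c y z"
    unfolding adj_def by blast
  then have "walk P1 P2 P3 x (w @ [(y, c, z)]) z"
    by (auto simp: walk_append)
  then show ?case ..
qed

definition red_cut :: "(nat \<times> nat) set \<Rightarrow> (nat \<times> nat) set \<Rightarrow> (nat \<times> nat) set \<Rightarrow> (nat \<Rightarrow> bool) \<Rightarrow> bool" where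
  "red_cut P1 P2 P3 \<rho> \<longleftrightarrow> (\<forall>c u v. has_edge P1 P2 P3 c u v \<longrightarrow> (\<rho> u \<noteq> \<rho> v \<longleftrightarrow> c = Red))"

lemma walk_red_count_parity:
  assumes "red_cut P1 P2 P3 \<rho>" and "walk P1 P2 P3 x w y"
  shows "odd (red_count w) \<longleftrightarrow> \<rho> x \<noteq> \<rho> y"
  using assms(2)
proof (induction w arbitrary: x)
  case (Cons s w)
  obtain u c v where s: "s = (u, c, v)"
    by (cases s)
  with Cons.prems have "\<rho> x \<noteq> \<rho> v \<longleftrightarrow> c = Red" and "walk P1 P2 P3 v w y"
    using assms(1) unfolding red_cut_def by auto
  with Cons.IH show ?case
    using s by auto
qed simp

lemma closed_walk_red_count_even:
  "red_cut P1 P2 P3 \<rho> \<Longrightarrow> closed_walk P1 P2 P3 w \<Longrightarrow> even (red_count w)"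
  unfolding closed_walk_iff_walk using walk_red_count_parity by blast

section \<open>The algebra generated by an edge-coloured graph\<close>

definition generators :: "(nat \<times> nat) set \<Rightarrow> (nat \<times> nat) set \<Rightarrow> (nat \<times> nat) set \<Rightarrow> cmat set" where
  "generators P1 P2 P3 =
     (\<lambda>(i, j). Bmat i j) ` P1 \<union> (\<lambda>(i, j). Cmat i j) ` P2 \<union> (\<lambda>(i, j). Dmat i j) ` P3"

lemma generatorsE:
  assumes "X \<in> generators P1 P2 P3"
  obtains i j where "(i, j) \<in> P1" "X = Fmat i j 1"
    | i j where "(i, j) \<in> P2" "X = Fmat i j \<i>"
    | i j where "(i, j) \<in> P3" "X = Dmat i j"
  using assms unfolding generators_def Bmat_eq_Fmat Cmat_eq_Fmat by auto

lemma blue_edge_Fmat_one: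
  assumes "has_edge P1 P2 P3 Blue x y"
  shows "Fmat x y 1 \<in> lie_gen n (generators P1 P2 P3)"
proof -
  have "Fmat x y 1 \<in> generators P1 P2 P3 \<or> Fmat y x 1 \<in> generators P1 P2 P3"
    using assms unfolding has_edge_def generators_def Bmat_eq_Fmat by force
  then show ?thesis
    using lie_gen_Fmat_swap[of y x 1] by (auto intro: lie_gen.base)
qed

lemma red_edge_Fmat_i:
  assumes "has_edge P1 P2 P3 Red x y"
  shows "Fmat x y \<i> \<in> lie_gen n (generators P1 P2 P3)"
proof -
  have "Fmat x y \<i> \<in> generators P1 P2 P3 \<or> Fmat y x \<i> \<in> generators P1 P2 P3"
    using assms unfolding has_edge_def generators_def Cmat_eq_Fmat by force
  then show ?thesis
    using lie_gen_Fmat_uminus[OF lie_gen_Fmat_swap[of y x \<i>]] by (auto intro: lie_gen.base)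
qed

lemma adj_imp_linked: "adj P1 P2 P3 x y \<Longrightarrow> linked n (generators P1 P2 P3) x y"
  unfolding adj_def
proof (elim exE)
  fix c assume "has_edge P1 P2 P3 c x y"
  then show "linked n (generators P1 P2 P3) x y"
    by (cases c) (auto simp: linked_def blue_edge_Fmat_one red_edge_Fmat_i has_edge_def Fmat_same_one lie_gen.zero)
qed

lemma adj_sym: "adj P1 P2 P3 x y \<Longrightarrow> adj P1 P2 P3 y x"
proof -
  have "has_edge P1 P2 P3 c x y \<longleftrightarrow> has_edge P1 P2 P3 c y x" for c
    by (cases c) (auto simp: has_edge_def)
  then show "adj P1 P2 P3 x y \<Longrightarrow> adj P1 P2 P3 y x"
    unfolding adj_def by blast
qed

lemma generators_in_block:
  assumes "\<And>i j. adj P1 P2 P3 i j \<Longrightarrow> i \<in> K \<longleftrightarrow> j \<in> K"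
  shows "generators P1 P2 P3 \<subseteq> {X. \<forall>x y. x \<in> K \<longrightarrow> y \<notin> K \<longrightarrow> X x y = 0}"
proof (intro subsetI CollectI allI impI)
  fix X x y assume X: "X \<in> generators P1 P2 P3" and xy: "x \<in> K" "y \<notin> K"
  show "X x y = 0"
    using X
  proof (cases rule: generatorsE)
    case (1 i j)
    then have "adj P1 P2 P3 i j"
      unfolding adj_def has_edge_def by (auto intro: exI[of _ Blue])
    then show ?thesis
      using Fmat_nonzero[of i j 1 x y] assms 1 xy by blast
  next
    case (2 i j)
    then have "adj P1 P2 P3 i j"
      unfolding adj_def has_edge_def by (auto intro: exI[of _ Red])
    then show ?thesis
      using Fmat_nonzero[of i j \<i> x y] assms 2 xy by blast
  next
    case (3 i j)
    then show ?thesis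
      using Dmat_nonzero[of i j x y] xy by blast
  qed
qed

lemma blue_connected_imp_connected: "blue_connected n P1 \<Longrightarrow> graph_connected n P1 P2 P3"
proof -
  have "adj P1 P2 P3 x y" if "has_edge P1 {} {} Blue x y" for x y
    unfolding adj_def using that by (intro exI[of _ Blue]) (simp add: has_edge_def)
  then have "(adj P1 P2 P3)\<^sup>*\<^sup>* x y" if "(has_edge P1 {} {} Blue)\<^sup>*\<^sup>* x y" for x y
    using that by (metis mono_rtranclp)
  then show "blue_connected n P1 \<Longrightarrow> graph_connected n P1 P2 P3"
    unfolding blue_connected_def graph_connected_def by blast
qed

locale colored_graph =
  fixes n :: nat and P1 P2 P3 :: "(nat \<times> nat) set"
  assumes P1_pairs: "P1 \<subseteq> index_pairs n"
    and P2_pairs: "P2 \<subseteq> index_pairs n"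
    and P3_pairs: "P3 \<subseteq> index_pairs n"
begin

abbreviation lie_S :: "cmat set" where
  "lie_S \<equiv> lie_gen n (generators P1 P2 P3)"

lemma has_edge_in_range: "has_edge P1 P2 P3 c x y \<Longrightarrow> x \<in> {1..n} \<and> y \<in> {1..n}"
  using P1_pairs P2_pairs P3_pairs by (cases c) (auto simp: has_edge_def index_pairs_def)

lemma has_edge_distinct: "has_edge P1 P2 P3 c x y \<Longrightarrow> c \<noteq> Green \<Longrightarrow> x \<noteq> y"
  using P1_pairs P2_pairs by (cases c) (auto simp: has_edge_def index_pairs_def)

lemma P3_in_range: "(i, j) \<in> P3 \<Longrightarrow> i \<in> {1..n} \<and> j \<in> {1..n} \<and> i \<noteq> j"
  using P3_pairs by (auto simp: index_pairs_def)

lemma has_self_loop_iff: "has_self_loop P1 P2 P3 \<longleftrightarrow> P3 \<noteq> {}"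
proof
  assume "has_self_loop P1 P2 P3"
  then obtain c u where loop: "has_edge P1 P2 P3 c u u"
    unfolding has_self_loop_def by blast
  then have "c = Green"
    using has_edge_distinct by blast
  with loop show "P3 \<noteq> {}"
    by (auto simp: has_edge_def)
next
  assume "P3 \<noteq> {}"
  then obtain i j where "(i, j) \<in> P3"
    by auto
  then have "has_edge P1 P2 P3 Green i i"
    by (force simp: has_edge_def)
  then show "has_self_loop P1 P2 P3"
    unfolding has_self_loop_def by blast
qed

lemma lie_S_subset_su: "lie_S \<subseteq> su n"
proof (rule lie_gen_subset[OF _ lie_subalgebra_su])
  show "generators P1 P2 P3 \<subseteq> su n"
    using P1_pairs P2_pairs P3_pairs
    by (auto simp: generators_def Bmat_eq_Fmat Cmat_eq_Fmat index_pairs_def intro!: Fmat_in_su Dmat_in_su)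
qed

lemma connected_imp_linked:
  assumes "graph_connected n P1 P2 P3" "x \<in> {1..n}" "y \<in> {1..n}"
  shows "linked n (generators P1 P2 P3) x y"
proof -
  have "(adj P1 P2 P3)\<^sup>*\<^sup>* x y"
    using assms unfolding graph_connected_def by blast
  then have "y \<in> {1..n} \<and> linked n (generators P1 P2 P3) x y"
  proof (induction rule: rtranclp_induct)
    case (step y w)
    then show ?case
      using adj_imp_linked linked_trans[OF \<open>x \<in> {1..n}\<close>] has_edge_in_range unfolding adj_def by metis
  qed (use assms linked_refl in auto)
  then show ?thesis ..
qed

lemma blue_connected_Fmat_one:
  assumes "blue_connected n P1" "x \<in> {1..n}" "y \<in> {1..n}"
  shows "Fmat x y 1 \<in> lie_S"
proof -
  have blue: "has_edge P1 P2 P3 Blue u v" if "has_edge P1 {} {} Blue u v" for u v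
    using that by (simp add: has_edge_def)
  have "(has_edge P1 {} {} Blue)\<^sup>*\<^sup>* x y"
    using assms unfolding blue_connected_def by blast
  then have "y \<in> {1..n} \<and> Fmat x y 1 \<in> lie_S"
  proof (induction rule: rtranclp_induct)
    case base
    show ?case
      using assms(2) by (simp add: Fmat_same_one lie_gen.zero)
  next
    case (step v w)
    then have vw: "has_edge P1 P2 P3 Blue v w" "v \<in> {1..n}" "w \<in> {1..n}" "v \<noteq> w"
      using blue has_edge_in_range has_edge_distinct by blast+
    consider "x = v" | "x = w" | "x \<noteq> v" "x \<noteq> w"
      by blast
    then have "Fmat x w 1 \<in> lie_S"
    proof cases
      case 3
      then show ?thesis
        using lie_gen_Fmat_bracket[OF assms(2) vw(2,3) _ vw(4)] step.IH blue_edge_Fmat_one[OF vw(1)] by fastforce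
    qed (use blue_edge_Fmat_one[OF vw(1)] in \<open>auto simp: Fmat_same_one lie_gen.zero\<close>)
    with vw show ?case
      by blast
  qed
  then show ?thesis ..
qed

lemma green_fully_linked:
  assumes "(i, j) \<in> P3" and "linked n (generators P1 P2 P3) i j"
  shows "fully_linked n (generators P1 P2 P3) i j"
proof -
  have r: "i \<in> {1..n}" "j \<in> {1..n}" "i \<noteq> j"
    using P3_in_range[OF assms(1)] by auto
  have "Dmat i j \<in> lie_S"
    using assms(1) unfolding generators_def by (force intro: lie_gen.base)
  then have rotate: "Fmat i j (2 * \<i> * z) \<in> lie_S" if "Fmat i j z \<in> lie_S" for z
    using lie_gen.brk[OF _ that] lie_bracket_Dmat_Fmat[OF r] by metis
  from assms(2) show ?thesis
    unfolding linked_def fully_linked_iff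
  proof
    assume one: "Fmat i j 1 \<in> lie_S"
    have "Fmat i j (complex_of_real (1/2) * (2 * \<i> * 1)) \<in> lie_S"
      by (rule lie_gen_Fmat_scaleR[OF rotate[OF one]])
    with one show "Fmat i j 1 \<in> lie_S \<and> Fmat i j \<i> \<in> lie_S"
      by simp
  next
    assume i: "Fmat i j \<i> \<in> lie_S"
    have "Fmat i j (complex_of_real (-1/2) * (2 * \<i> * \<i>)) \<in> lie_S"
      by (rule lie_gen_Fmat_scaleR[OF rotate[OF i]])
    with i show "Fmat i j 1 \<in> lie_S \<and> Fmat i j \<i> \<in> lie_S"
      by simp
  qed
qed

lemma lie_S_eq_su_if_fully_linked:
  assumes "graph_connected n P1 P2 P3"
    and "a \<in> {1..n}" "b \<in> {1..n}" "a \<noteq> b" "fully_linked n (generators P1 P2 P3) a b"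
  shows "lie_S = su n"
proof
  show "lie_S \<subseteq> su n"
    by (rule lie_S_subset_su)
  have "fully_linked n (generators P1 P2 P3) x y" if "x \<in> {1..n}" "y \<in> {1..n}" "x \<noteq> y" for x y
    using fully_linked_all_pairs[OF connected_imp_linked[OF assms(1)] assms(2-5) that] .
  then show "su n \<subseteq> lie_S"
    using su_subset_lie_gen assms(2) unfolding fully_linked_def by auto
qed

lemma red_cut_if_no_fully_linked:
  assumes conn: "graph_connected n P1 P2 P3" and x0: "x0 \<in> {1..n}"
    and none: "\<And>a b. a \<in> {1..n} \<Longrightarrow> b \<in> {1..n} \<Longrightarrow> a \<noteq> b \<Longrightarrow> \<not> fully_linked n (generators P1 P2 P3) a b"
  shows "red_cut P1 P2 P3 (imag_linked n (generators P1 P2 P3) x0)"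
proof -
  let ?\<sigma> = "imag_linked n (generators P1 P2 P3)"
  have "?\<sigma> u v \<longleftrightarrow> c = Red" if uv: "has_edge P1 P2 P3 c u v" for c u v
  proof (cases c)
    case Blue
    have r: "u \<in> {1..n}" "v \<in> {1..n}" "u \<noteq> v"
      using has_edge_in_range[OF uv] has_edge_distinct[OF uv] Blue by auto
    have "Fmat u v 1 \<in> lie_S"
      using blue_edge_Fmat_one uv Blue by blast
    then show ?thesis
      using Fmat_one_iff_not_imag_linked[OF connected_imp_linked[OF conn r(1,2)] none[OF r] r(3)] Blue
      by simp
  next
    case Red
    then show ?thesis
      using has_edge_distinct[OF uv] red_edge_Fmat_i uv unfolding imag_linked_def by auto
  qed (use uv in \<open>simp add: has_edge_def imag_linked_def\<close>)
  then show ?thesis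
    unfolding red_cut_def
    using imag_linked_cocycle[OF connected_imp_linked[OF conn] none x0] has_edge_in_range by blast
qed

lemma fully_linked_pair_if_odd_closed_walk:
  assumes conn: "graph_connected n P1 P2 P3" and w: "closed_walk P1 P2 P3 w" "odd (red_count w)"
  shows "\<exists>a\<in>{1..n}. \<exists>b\<in>{1..n}. a \<noteq> b \<and> fully_linked n (generators P1 P2 P3) a b"
proof (rule ccontr)
  assume none: "\<not> ?thesis"
  obtain u c v w' where "w = (u, c, v) # w'" "has_edge P1 P2 P3 c u v"
    using w(1) unfolding closed_walk_iff_walk by (cases w) auto
  then have "u \<in> {1..n}"
    using has_edge_in_range by blast
  then obtain \<rho> where "red_cut P1 P2 P3 \<rho>"
    using red_cut_if_no_fully_linked[OF conn] none by blast
  then show False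
    using closed_walk_red_count_even w by blast
qed

lemma fully_linked_pair_if_green_edge:
  assumes conn: "graph_connected n P1 P2 P3" and "P3 \<noteq> {}"
  shows "\<exists>a\<in>{1..n}. \<exists>b\<in>{1..n}. a \<noteq> b \<and> fully_linked n (generators P1 P2 P3) a b"
proof -
  obtain i j where ij: "(i, j) \<in> P3"
    using assms(2) by auto
  with P3_in_range show ?thesis
    using green_fully_linked[OF ij connected_imp_linked[OF conn]] by blast
qed

lemma fully_linked_pair_if_blue_connected:
  assumes blue: "blue_connected n P1" and "color_used P1 P2 P3 c" "c \<noteq> Blue"
  shows "\<exists>a\<in>{1..n}. \<exists>b\<in>{1..n}. a \<noteq> b \<and> fully_linked n (generators P1 P2 P3) a b"
proof -
  obtain u v where uv: "has_edge P1 P2 P3 c u v"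
    using assms(2) unfolding color_used_def by blast
  show ?thesis
  proof (cases c)
    case Red
    then have "u \<in> {1..n}" "v \<in> {1..n}" "u \<noteq> v"
      using has_edge_in_range[OF uv] has_edge_distinct[OF uv] by auto
    moreover have "fully_linked n (generators P1 P2 P3) u v"
      unfolding fully_linked_iff using blue_connected_Fmat_one[OF blue] red_edge_Fmat_i uv Red calculation
      by blast
    ultimately show ?thesis
      by blast
  next
    case Green
    then obtain i j where ij: "(i, j) \<in> P3"
      using uv by (auto simp: has_edge_def)
    then have "linked n (generators P1 P2 P3) i j"
      unfolding linked_def using blue_connected_Fmat_one[OF blue] P3_in_range by blast
    with ij P3_in_range show ?thesis
      using green_fully_linked by blast
  qed (use assms in simp)
qed

lemma connected_if_lie_S_eq_su:
  assumes "lie_S = su n"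
  shows "graph_connected n P1 P2 P3"
proof (rule ccontr)
  assume "\<not> graph_connected n P1 P2 P3"
  then obtain a b where ab: "a \<in> {1..n}" "b \<in> {1..n}" "\<not> (adj P1 P2 P3)\<^sup>*\<^sup>* a b"
    unfolding graph_connected_def by blast
  define K where "K = {x. (adj P1 P2 P3)\<^sup>*\<^sup>* a x}"
  have "i \<in> K \<longleftrightarrow> j \<in> K" if "adj P1 P2 P3 i j" for i j
    using that adj_sym unfolding K_def by (metis mem_Collect_eq rtranclp.rtrancl_into_rtrancl)
  then have "lie_S \<subseteq> {X. \<forall>x y. x \<in> K \<longrightarrow> y \<notin> K \<longrightarrow> X x y = 0}"
    by (rule lie_gen_subset[OF generators_in_block lie_subalgebra_block])
  moreover have "a \<noteq> b"
    using ab by auto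
  then have "Fmat a b 1 \<in> lie_S"
    using assms Fmat_in_su ab by blast
  moreover have "a \<in> K" "b \<notin> K"
    using ab unfolding K_def by auto
  ultimately show False
    using \<open>a \<noteq> b\<close> unfolding Fmat_def by fastforce
qed

lemma red_cut_if_even_closed_walks:
  assumes conn: "graph_connected n P1 P2 P3" and x0: "x0 \<in> {1..n}"
    and even: "\<And>w. closed_walk P1 P2 P3 w \<Longrightarrow> even (red_count w)"
  shows "\<exists>\<rho>. red_cut P1 P2 P3 \<rho>"
proof -
  define \<rho> where "\<rho> x \<longleftrightarrow> (\<exists>w. walk P1 P2 P3 x0 w x \<and> odd (red_count w))" for x
  have parity_unique: "odd (red_count w1) \<longleftrightarrow> odd (red_count w2)"
    if "walk P1 P2 P3 x0 w1 x" "walk P1 P2 P3 x0 w2 x" for w1 w2 x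
  proof -
    define W where "W = w1 @ rev (map reverse_step w2)"
    have "walk P1 P2 P3 x0 W x0"
      unfolding W_def walk_append using that walk_reverse by blast
    then have "W = [] \<or> closed_walk P1 P2 P3 W"
      unfolding closed_walk_iff_walk by (cases W) auto
    then have "even (red_count W)"
      using even by auto
    then show ?thesis
      unfolding W_def by simp
  qed
  have \<rho>_walk: "\<rho> x \<longleftrightarrow> odd (red_count w)" if "walk P1 P2 P3 x0 w x" for w x
    using parity_unique that unfolding \<rho>_def by blast
  have "\<rho> u \<noteq> \<rho> v \<longleftrightarrow> c = Red" if uv: "has_edge P1 P2 P3 c u v" for c u v
  proof -
    obtain w where w: "walk P1 P2 P3 x0 w u"
      using conn x0 has_edge_in_range[OF uv] rtranclp_adj_imp_walk unfolding graph_connected_def by blast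
    then have "walk P1 P2 P3 x0 (w @ [(u, c, v)]) v"
      using uv by (auto simp: walk_append)
    from \<rho>_walk[OF this] \<rho>_walk[OF w] show ?thesis
      by auto
  qed
  then show ?thesis
    unfolding red_cut_def by blast
qed

lemma generators_phase_real:
  assumes "P3 = {}" and cut: "red_cut P1 P2 P3 \<rho>" and g_def: "\<And>x. g x = (if \<rho> x then \<i> else 1)"
  shows "generators P1 P2 P3 \<subseteq> {X. \<forall>x y. cnj (g x) * X x y * g y \<in> \<real>}"
proof (intro subsetI CollectI allI)
  fix X x y assume "X \<in> generators P1 P2 P3"
  then show "cnj (g x) * X x y * g y \<in> \<real>"
  proof (cases rule: generatorsE)
    case (1 i j)
    then have "has_edge P1 P2 P3 Blue i j"
      by (simp add: has_edge_def)
    then have "\<rho> i = \<rho> j" "i \<noteq> j"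
      using cut has_edge_distinct unfolding red_cut_def by auto
    then have "cnj (g i) * 1 * g j \<in> \<real>"
      by (simp add: g_def)
    then show ?thesis
      using Fmat_phase_real \<open>i \<noteq> j\<close> 1 by blast
  next
    case (2 i j)
    then have "has_edge P1 P2 P3 Red i j"
      by (simp add: has_edge_def)
    then have "\<rho> i \<noteq> \<rho> j" "i \<noteq> j"
      using cut has_edge_distinct unfolding red_cut_def by auto
    moreover from this have "cnj (g i) * \<i> * g j \<in> \<real>"
      by (cases "\<rho> i") (simp_all add: g_def)
    ultimately show ?thesis
      using Fmat_phase_real 2 by blast
  qed (use assms(1) in simp)
qed

lemma lie_S_neq_su_if_red_cut:
  assumes "n \<ge> 2" and "P3 = {}" and cut: "red_cut P1 P2 P3 \<rho>"
  shows "lie_S \<noteq> su n"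
proof
  assume su: "lie_S = su n"
  define g where "g x = (if \<rho> x then \<i> else 1)" for x
  have unit: "cnj (g k) * g k = 1" for k
    by (simp add: g_def)
  have "lie_S \<subseteq> {X. \<forall>x y. cnj (g x) * X x y * g y \<in> \<real>}"
    using lie_gen_subset[OF generators_phase_real[OF assms(2,3) g_def] lie_subalgebra_phase_real[of g, OF unit]] .
  moreover have "Dmat 1 2 \<in> lie_S"
    using su Dmat_in_su assms(1) by auto
  ultimately have "cnj (g 1) * Dmat 1 2 1 1 * g 1 \<in> \<real>"
    by blast
  moreover have "cnj (g 1) * Dmat 1 2 1 1 * g 1 = \<i>"
    using unit[of 1] by (simp add: Dmat_def Emat_def mult.commute mult.left_commute)
  ultimately show False
    using i_not_in_Reals by simp
qed

lemma lie_S_eq_su_necessary: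
  assumes "n \<ge> 2" and "lie_S = su n"
  shows "graph_connected n P1 P2 P3 \<and> (P3 \<noteq> {} \<or> (\<exists>w. closed_walk P1 P2 P3 w \<and> odd (red_count w)))"
proof -
  have conn: "graph_connected n P1 P2 P3"
    using assms(2) by (rule connected_if_lie_S_eq_su)
  moreover have "1 \<in> {1..n}"
    using assms(1) by simp
  ultimately show ?thesis
    using red_cut_if_even_closed_walks lie_S_neq_su_if_red_cut[OF assms(1)] assms(2) by blast
qed

end

theorem proposition1:
  fixes n :: nat and P1 P2 P3 :: "(nat \<times> nat) set"
  assumes "n \<ge> 2"
    and "P1 \<subseteq> {(i, j). 1 \<le> i \<and> i < j \<and> j \<le> n}"
    and "P2 \<subseteq> {(i, j). 1 \<le> i \<and> i < j \<and> j \<le> n}"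
    and "P3 \<subseteq> {(i, j). 1 \<le> i \<and> i < j \<and> j \<le> n}"
  shows "lie_gen n ((\<lambda>(i, j). Bmat i j) ` P1 \<union> (\<lambda>(i, j). Cmat i j) ` P2 \<union> (\<lambda>(i, j). Dmat i j) ` P3) = su n
    \<longleftrightarrow>
      ((\<exists>c1 c2. c1 \<noteq> c2 \<and> color_used P1 P2 P3 c1 \<and> color_used P1 P2 P3 c2) \<and> blue_connected n P1)
    \<or> (graph_connected n P1 P2 P3 \<and> has_self_loop P1 P2 P3)
    \<or> (graph_connected n P1 P2 P3 \<and> (\<exists>w. closed_walk P1 P2 P3 w \<and> odd (red_count w)))"
proof -
  interpret colored_graph n P1 P2 P3
    using assms(2-4) by unfold_locales (simp_all add: index_pairs_def)
  show ?thesis (is "?L \<longleftrightarrow> ?blue \<or> ?loop \<or> ?odd")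
  proof
    assume "?L"
    then show "?blue \<or> ?loop \<or> ?odd"
      using lie_S_eq_su_necessary[OF assms(1)] unfolding generators_def[symmetric] has_self_loop_iff
      by blast
  next
    assume "?blue \<or> ?loop \<or> ?odd"
    then have "graph_connected n P1 P2 P3 \<and>
        (\<exists>a\<in>{1..n}. \<exists>b\<in>{1..n}. a \<noteq> b \<and> fully_linked n (generators P1 P2 P3) a b)"
    proof (elim disjE conjE exE)
      fix c1 c2 assume "c1 \<noteq> c2" "color_used P1 P2 P3 c1" "color_used P1 P2 P3 c2" "blue_connected n P1"
      then show ?thesis
        using blue_connected_imp_connected fully_linked_pair_if_blue_connected by metis
    qed (use fully_linked_pair_if_green_edge has_self_loop_iff fully_linked_pair_if_odd_closed_walk in blast)+
    then show "?L"
      unfolding generators_def[symmetric] using lie_S_eq_su_if_fully_linked by blast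
  qed
qed

end
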